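(* Let $q$ be a prime power and let $C_1=[n,k_1,d_1]_q$ and $C_2=[n,k_2,d_2]_q$ be linear codes over $\mathbb{F}_q$ with $C_2\subset C_1$ (giving, via the CSS construction, an AQECC $[[n,k,d_z/d_x]]_q$ with $k=k_1-k_2$). Let $C_2^{e}$ be the extended code of $C_2$ and $(d_2^{e})^{\perp}$ the minimum distance of its Euclidean dual $(C_2^{e})^{\perp}$. Then: (a) if $(d_1)_{even}\leq (d_1)_{odd}$, there exists an AQECC $[[n+1,k,d_z^{e}/d_x^{e}]]_q$ with $d_z^{e}\geq d_1$ and $d_x^{e}\geq (d_2^{e})^{\perp}$; (b) if $(d_1)_{odd}<(d_1)_{even}$, there exists an AQECC $[[n+1,k,d_z^{e}/d_x^{e}]]_q$ with $d_z^{e}\geq d_1+1$ and $d_x^{e}\geq (d_2^{e})^{\perp}$.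
   Context: An AQECC $[[n,k,d_z/d_x]]_q$ is a $q^k$-dimensional subspace of $\mathbb{C}^{q^n}$ correcting all qudit-flip errors up to $\lfloor (d_x-1)/2\rfloor$ and all phase-shift errors up to $\lfloor (d_z-1)/2\rfloor$. CSS construction: if $C_2\subset C_1\subseteq\mathbb{F}_q^n$ are linear of dimensions $k_2<k_1$, there is an AQECC $[[n,k_1-k_2,d_z/d_x]]_q$ with $d_z=\mathrm{wt}(C_1\setminus C_2)$, $d_x=\mathrm{wt}(C_2^{\perp}\setminus C_1^{\perp})$. The extended code of a linear code $C\subseteq\mathbb{F}_q^n$ is $C^{e}=\{(x_1,\dots,x_{n+1}): (x_1,\dots,x_n)\in C,\ x_1+\cdots+x_{n+1}=0\}$. A vector is even-like if its coordinates sum to $0$ and odd-like otherwise; for a code $C$ with minimum distance $d$, $(d)_{even}$ (resp. $(d)_{odd}$) denotes the minimum weight of the nonzero even-like (resp. odd-like) codewords of $C$. *)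

theory Defs
  imports Main "HOL-Library.Extended_Nat"
begin

text \<open>Vectors of F_q^n are lists of length n over a finite field 'a (q = CARD('a)).\<close>

definition hw :: "'a::zero list \<Rightarrow> nat" where
  "hw v = card {i. i < length v \<and> v ! i \<noteq> 0}"

definition nonzero_vec :: "'a::zero list \<Rightarrow> bool" where
  "nonzero_vec v \<longleftrightarrow> v \<noteq> replicate (length v) 0"

definition linear_code :: "nat \<Rightarrow> 'a::field list set \<Rightarrow> bool" where
  "linear_code n C \<longleftrightarrow> C \<subseteq> {v. length v = n} \<and> replicate n 0 \<in> C \<and>
     (\<forall>u\<in>C. \<forall>v\<in>C. map2 (+) u v \<in> C) \<and> (\<forall>a. \<forall>u\<in>C. map ((*) a) u \<in> C)"

definition code_dim :: "'a::{finite,field} list set \<Rightarrow> nat" where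
  "code_dim C = (THE k. card C = card (UNIV::'a set) ^ k)"

definition dotp :: "'a::field list \<Rightarrow> 'a list \<Rightarrow> 'a" where
  "dotp u v = sum_list (map2 (*) u v)"

definition dual_code :: "nat \<Rightarrow> 'a::field list set \<Rightarrow> 'a list set" where
  "dual_code n C = {v. length v = n \<and> (\<forall>c\<in>C. dotp c v = 0)}"

definition extended_code :: "nat \<Rightarrow> 'a::field list set \<Rightarrow> 'a list set" where
  "extended_code n C = {x. length x = n + 1 \<and> take n x \<in> C \<and> sum_list x = 0}"

text \<open>Minimum weight of a set of vectors (infinity for the empty set).\<close>
definition wt_set :: "'a::zero list set \<Rightarrow> enat" where
  "wt_set S = Inf ((\<lambda>v. enat (hw v)) ` S)"

definition min_dist :: "'a::zero list set \<Rightarrow> enat" where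
  "min_dist C = wt_set {c\<in>C. nonzero_vec c}"

definition d_even :: "'a::{zero,monoid_add} list set \<Rightarrow> enat" where
  "d_even C = wt_set {c\<in>C. nonzero_vec c \<and> sum_list c = 0}"

definition d_odd :: "'a::{zero,monoid_add} list set \<Rightarrow> enat" where
  "d_odd C = wt_set {c\<in>C. nonzero_vec c \<and> sum_list c \<noteq> 0}"

definition css_aqecc :: "'a::{finite,field} itself \<Rightarrow> nat \<Rightarrow> nat \<Rightarrow> enat \<Rightarrow> enat \<Rightarrow> bool" where
  "css_aqecc _ n k dz dx \<longleftrightarrow> (\<exists>(D1::'a list set) D2.
     linear_code n D1 \<and> linear_code n D2 \<and> D2 \<subset> D1 \<and>
     code_dim D1 - code_dim D2 = k \<and>
     dz = wt_set (D1 - D2) \<and> dx = wt_set (dual_code n D2 - dual_code n D1))"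

end

(*
  A word of the extended code C1^e outside C2^e is the parity extension c @ [- sum c] of some
  c in C1 - C2, so c is nonzero; its weight is wt c, plus one exactly when c is odd-like.
  Hence it is at least d1, and if d_odd < d_even it is at least d1 + 1: odd-like c gain the
  parity coordinate, while even-like c already have weight at least d_even > d_odd >= d1.
  Parity extension is injective and preserves linearity and strict inclusion, so the CSS pair
  (C1^e, C2^e) has the same k; the bound on d_x holds because 0 lies in the dual of C1^e.
*)

theory Submission
  imports Defs
begin

lemma sum_list_map2_plus:
  fixes u v :: "'a::comm_monoid_add list"
  assumes "length u = length v"
  shows "sum_list (map2 (+) u v) = sum_list u + sum_list v"
  using assms
proof (induction u arbitrary: v)
  case Nil
  then show ?case by simp
next
  case (Cons a u)
  then show ?case by (cases v) (auto simp: add_ac)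
qed

lemma hw_snoc: "hw (xs @ [a]) = hw xs + (if a = 0 then 0 else 1)"
proof -
  have "{i. i < length (xs @ [a]) \<and> (xs @ [a]) ! i \<noteq> 0} =
        {i. i < length xs \<and> xs ! i \<noteq> 0} \<union> (if a = 0 then {} else {length xs})"
    by (auto simp: nth_append less_Suc_eq)
  then show ?thesis
    unfolding hw_def by simp
qed

lemma wt_set_greatest: "(\<And>v. v \<in> S \<Longrightarrow> m \<le> enat (hw v)) \<Longrightarrow> m \<le> wt_set S"
  unfolding wt_set_def by (auto intro: Inf_greatest)

lemma wt_set_lower: "v \<in> S \<Longrightarrow> wt_set S \<le> enat (hw v)"
  unfolding wt_set_def by (auto intro: Inf_lower)

lemma wt_set_antimono: "S \<subseteq> T \<Longrightarrow> wt_set T \<le> wt_set S"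
  unfolding wt_set_def by (auto intro: Inf_superset_mono)

lemma zero_in_dual_code: "replicate m 0 \<in> dual_code m C"
  by (simp add: dual_code_def dotp_def zip_replicate2 o_def del: replicate.simps)

lemma min_dist_le_wt_set_diff:
  assumes "A \<subseteq> {v. length v = m}" and "replicate m 0 \<in> B"
  shows "min_dist A \<le> wt_set (A - B)"
  unfolding min_dist_def
  using assms by (intro wt_set_antimono) (auto simp: nonzero_vec_def)

definition extend_vec :: "'a::ab_group_add list \<Rightarrow> 'a list" where
  "extend_vec c = c @ [- sum_list c]"

lemma length_extend_vec [simp]: "length (extend_vec c) = Suc (length c)"
  by (simp add: extend_vec_def)

lemma inj_extend_vec: "inj extend_vec"
  by (rule injI) (simp add: extend_vec_def)

lemma extend_vec_replicate_zero:
  "extend_vec (replicate n (0::'a::ab_group_add)) = replicate (Suc n) 0"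
proof -
  have "sum_list (replicate n (0::'a)) = 0"
    using sum_list_0[of "replicate n (0::'a)"] by (simp add: map_replicate_const)
  then show ?thesis
    by (simp add: extend_vec_def replicate_append_same)
qed

lemma extend_vec_map2_plus:
  assumes "length u = length v"
  shows "map2 (+) (extend_vec u) (extend_vec v) = extend_vec (map2 (+) u v)"
  using assms by (simp add: extend_vec_def sum_list_map2_plus)

lemma extend_vec_map_mult:
  fixes u :: "'a::comm_ring list"
  shows "map ((*) a) (extend_vec u) = extend_vec (map ((*) a) u)"
  by (simp add: extend_vec_def sum_list_const_mult)

lemma hw_extend_vec: "hw (extend_vec c) = hw c + (if sum_list c = 0 then 0 else 1)"
  by (simp add: extend_vec_def hw_snoc)

lemma extended_code_eq_image:
  assumes "C \<subseteq> {v. length v = n}"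
  shows "extended_code n C = extend_vec ` C"
proof
  show "extend_vec ` C \<subseteq> extended_code n C"
    using assms by (auto simp: extended_code_def extend_vec_def)
next
  show "extended_code n C \<subseteq> extend_vec ` C"
  proof
    fix x assume x: "x \<in> extended_code n C"
    then have len: "length x = Suc n" and sum: "sum_list x = 0" and take: "take n x \<in> C"
      by (auto simp: extended_code_def)
    have butlast: "butlast x = take n x"
      using len by (simp add: butlast_conv_take)
    have "x \<noteq> []"
      using len by auto
    then have "x = butlast x @ [last x]"
      by simp
    moreover have "last x = - sum_list (butlast x)"
      using sum by (subst (asm) \<open>x = butlast x @ [last x]\<close>) (simp add: eq_neg_iff_add_eq_0 add.commute)
    ultimately have "x = extend_vec (take n x)"
      by (simp add: extend_vec_def butlast)
    with take show "x \<in> extend_vec ` C" by blast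
  qed
qed

lemma linear_code_extended_code:
  assumes "linear_code n C"
  shows "linear_code (n + 1) (extended_code n C)"
proof -
  have len: "C \<subseteq> {v. length v = n}" and zero: "replicate n 0 \<in> C"
    and add: "\<And>u v. u \<in> C \<Longrightarrow> v \<in> C \<Longrightarrow> map2 (+) u v \<in> C"
    and scale: "\<And>a u. u \<in> C \<Longrightarrow> map ((*) a) u \<in> C"
    using assms by (auto simp: linear_code_def)
  have "map2 (+) x y \<in> extend_vec ` C" if xy: "x \<in> extend_vec ` C" "y \<in> extend_vec ` C" for x y
  proof -
    obtain u v where uv: "u \<in> C" "v \<in> C" and "x = extend_vec u" "y = extend_vec v"
      using xy by blast
    moreover have "length u = length v"
      using uv len by auto
    ultimately show ?thesis
      using add by (auto simp: extend_vec_map2_plus)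
  qed
  moreover have "map ((*) a) x \<in> extend_vec ` C" if "x \<in> extend_vec ` C" for a x
    using that scale by (auto simp: extend_vec_map_mult)
  moreover have "replicate (n + 1) 0 \<in> extend_vec ` C"
    using zero extend_vec_replicate_zero[of n] by (metis Suc_eq_plus1 image_eqI)
  ultimately show ?thesis
    using len by (auto simp: linear_code_def extended_code_eq_image)
qed

lemma code_dim_extended_code:
  fixes C :: "'a::{finite,field} list set"
  assumes "C \<subseteq> {v. length v = n}"
  shows "code_dim (extended_code n C) = code_dim C"
  using assms by (simp add: code_dim_def extended_code_eq_image card_image inj_on_subset[OF inj_extend_vec])

lemma extended_code_strict_mono:
  assumes "C1 \<subseteq> {v. length v = n}" and "C2 \<subset> C1"
  shows "extended_code n C2 \<subset> extended_code n C1"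
proof -
  have "C2 \<subseteq> {v. length v = n}"
    using assms by blast
  with assms show ?thesis
    by (simp add: extended_code_eq_image psubset_eq inj_image_subset_iff inj_image_eq_iff inj_extend_vec)
qed

lemma css_aqecc_extended_codes:
  fixes C1 C2 :: "'a::{finite,field} list set"
  assumes "linear_code n C1" and "linear_code n C2" and "C2 \<subset> C1"
  shows "css_aqecc TYPE('a) (n + 1) (code_dim C1 - code_dim C2)
    (wt_set (extended_code n C1 - extended_code n C2))
    (wt_set (dual_code (n + 1) (extended_code n C2) - dual_code (n + 1) (extended_code n C1)))"
proof -
  have "C1 \<subseteq> {v. length v = n}" and "C2 \<subseteq> {v. length v = n}"
    using assms by (auto simp: linear_code_def)
  then show ?thesis
    unfolding css_aqecc_def
    using assms linear_code_extended_code extended_code_strict_mono code_dim_extended_code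
    by metis
qed

lemma min_dist_le_hw_extend_vec:
  assumes "c \<in> C" and "nonzero_vec c"
  shows "min_dist C \<le> hw (extend_vec c)"
proof -
  have "min_dist C \<le> hw c"
    unfolding min_dist_def using assms by (intro wt_set_lower) simp
  also have "\<dots> \<le> hw (extend_vec c)"
    by (simp add: hw_extend_vec)
  finally show ?thesis .
qed

lemma min_dist_plus_one_le_hw_extend_vec:
  assumes "d_odd C < d_even C" and "c \<in> C" and "nonzero_vec c"
  shows "min_dist C + 1 \<le> hw (extend_vec c)"
proof (cases "sum_list c = 0")
  case True
  have "min_dist C + 1 \<le> d_odd C + 1"
    unfolding min_dist_def d_odd_def by (intro add_right_mono wt_set_antimono) blast
  also have "\<dots> \<le> d_even C"
    using assms(1) by (simp add: ileI1 flip: eSuc_plus_1)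
  also have "\<dots> \<le> hw c"
    unfolding d_even_def using assms True by (intro wt_set_lower) simp
  finally show ?thesis
    using True by (simp add: hw_extend_vec)
next
  case False
  have "min_dist C \<le> hw c"
    unfolding min_dist_def using assms by (intro wt_set_lower) simp
  then have "min_dist C + 1 \<le> enat (hw c) + 1"
    by (rule add_right_mono)
  also have "\<dots> = hw (extend_vec c)"
    using False by (simp add: hw_extend_vec one_enat_def)
  finally show ?thesis .
qed

lemma le_wt_set_extended_code_diff:
  assumes "linear_code n C1" and "linear_code n C2"
    and "\<And>c. c \<in> C1 \<Longrightarrow> nonzero_vec c \<Longrightarrow> m \<le> enat (hw (extend_vec c))"
  shows "m \<le> wt_set (extended_code n C1 - extended_code n C2)"
proof (rule wt_set_greatest)
  have len1: "C1 \<subseteq> {v. length v = n}" and len2: "C2 \<subseteq> {v. length v = n}"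
    and zero: "replicate n 0 \<in> C2"
    using assms by (auto simp: linear_code_def)
  fix x assume "x \<in> extended_code n C1 - extended_code n C2"
  then obtain c where x: "x = extend_vec c" and c: "c \<in> C1" "c \<notin> C2"
    using len1 len2 by (auto simp: extended_code_eq_image)
  have "nonzero_vec c"
    using c len1 zero by (auto simp: nonzero_vec_def)
  then show "m \<le> enat (hw x)"
    using assms(3) c x by blast
qed

theorem theorem8:
  fixes C1 C2 :: "'a::{finite,field} list set" and n :: nat
  assumes "linear_code n C1" and "linear_code n C2" and "C2 \<subset> C1"
  shows "(d_even C1 \<le> d_odd C1 \<longrightarrow>
            (\<exists>dz dx. css_aqecc TYPE('a) (n + 1) (code_dim C1 - code_dim C2) dz dx \<and>
               dz \<ge> min_dist C1 \<and> dx \<ge> min_dist (dual_code (n + 1) (extended_code n C2))))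
       \<and> (d_odd C1 < d_even C1 \<longrightarrow>
            (\<exists>dz dx. css_aqecc TYPE('a) (n + 1) (code_dim C1 - code_dim C2) dz dx \<and>
               dz \<ge> min_dist C1 + 1 \<and> dx \<ge> min_dist (dual_code (n + 1) (extended_code n C2))))"
proof -
  let ?E1 = "extended_code n C1" and ?E2 = "extended_code n C2"
  have css: "css_aqecc TYPE('a) (n + 1) (code_dim C1 - code_dim C2) (wt_set (?E1 - ?E2))
      (wt_set (dual_code (n + 1) ?E2 - dual_code (n + 1) ?E1))"
    using css_aqecc_extended_codes[OF assms] .
  have dx: "min_dist (dual_code (n + 1) ?E2) \<le> wt_set (dual_code (n + 1) ?E2 - dual_code (n + 1) ?E1)"
    by (rule min_dist_le_wt_set_diff[OF _ zero_in_dual_code]) (auto simp: dual_code_def)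
  have dz: "min_dist C1 \<le> wt_set (?E1 - ?E2)"
    using assms(1,2) by (rule le_wt_set_extended_code_diff) (rule min_dist_le_hw_extend_vec)
  have dz_odd: "min_dist C1 + 1 \<le> wt_set (?E1 - ?E2)" if "d_odd C1 < d_even C1"
    using assms(1,2) by (rule le_wt_set_extended_code_diff) (rule min_dist_plus_one_le_hw_extend_vec[OF that])
  show ?thesis
    using css dx dz dz_odd by blast
qed

end
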